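(* In the setting below, suppose the tight disturbance bound assumption and the persistent excitation assumption hold, and let $\Theta_t=\Theta_0\cap\bigcap_{j=1}^t\Delta_j$ (the minimal parameter set). Then for every $\epsilon>0$, every $\theta\in\Theta_0$ with $\|\theta-\theta^\ast\|\ge\epsilon$ and every $t\in\mathbb{N}_{\ge0}$, $$\Pr\{\theta\in\Theta_t\}\ \le\ \Bigl[1-p_w\bigl(\epsilon\sqrt{\beta/N_u}\bigr)\Bigr]^{\lfloor t/N_u\rfloor}.$$
   Context: Setting: $\theta^\ast\in\mathbb{R}^p$ is a fixed (unknown) parameter vector. $\Theta_0\subset\mathbb{R}^p$ is a compact convex polytope containing $\theta^\ast$. $\mathcal{W}=\{w\in\mathbb{R}^{n_x}:\Pi_w w\le\pi_w\}$ is a compact convex polytope with $\pi_w>0$. The disturbances $w_0,w_1,\dots$ are independent random vectors with $w_t\in\mathcal{W}$ for all $t$. $D_0,D_1,\dots\in\mathbb{R}^{n_x\times p}$ is a given (non-random) sequence of regressor matrices. For $t\ge1$ the (random) unfalsified parameter set is $\Delta_t=\{\theta\in\mathbb{R}^p: D_{t-1}(\theta^\ast-\theta)+w_{t-1}\in\mathcal{W}\}$. $\|\cdot\|$ is the Euclidean norm (induced 2-norm for matrices); $\partial\mathcal{W}$ is the boundary of $\mathcal{W}$. Tight disturbance bound assumption: there is a function $p_w:(0,\infty)\to(0,1]$ such that for all $w^0\in\partial\mathcal{W}$, all $\epsilon>0$ and all $t\ge0$, $\Pr\{\|w_t-w^0\|<\epsilon\}\ge p_w(\epsilon)$. Persistent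 excitation assumption: there exist $\tau>0$, $\beta>0$ and an integer $N_u\ge\lceil p/n_x\rceil$ such that for every $t\ge0$, $\|D_t\|\le\tau$ and $\sum_{j=t}^{t+N_u-1}D_j^\top D_j\succeq\beta I$. *)

theory Defs
  imports "HOL-Analysis.Analysis" "HOL-Probability.Probability"
begin

definition hpoly :: "real^'n^'m \<Rightarrow> real^'m \<Rightarrow> (real^'n) set" where
  "hpoly Pw pw = {w. \<forall>i. (Pw *v w) $ i \<le> pw $ i}"

definition loewner_ge :: "real^'p^'p \<Rightarrow> real^'p^'p \<Rightarrow> bool" where
  "loewner_ge A B \<longleftrightarrow> (\<forall>x. x \<bullet> ((A - B) *v x) \<ge> 0)"

definition unfalsified ::
  "(nat \<Rightarrow> real^'p^'n) \<Rightarrow> real^'p \<Rightarrow> (real^'n) set \<Rightarrow> (nat \<Rightarrow> 'w \<Rightarrow> real^'n)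
     \<Rightarrow> nat \<Rightarrow> 'w \<Rightarrow> (real^'p) set" where
  "unfalsified D \<theta>s W w t \<omega> = {\<theta>. D (t - 1) *v (\<theta>s - \<theta>) + w (t - 1) \<omega> \<in> W}"

definition min_param_set ::
  "(real^'p) set \<Rightarrow> (nat \<Rightarrow> real^'p^'n) \<Rightarrow> real^'p \<Rightarrow> (real^'n) set \<Rightarrow> (nat \<Rightarrow> 'w \<Rightarrow> real^'n)
     \<Rightarrow> nat \<Rightarrow> 'w \<Rightarrow> (real^'p) set" where
  "min_param_set \<Theta>0 D \<theta>s W w t \<omega> = \<Theta>0 \<inter> (\<Inter>j\<in>{1..t}. unfalsified D \<theta>s W w j \<omega>)"

end

theory Submission
  imports Defs
begin

text \<open>Persistent excitation forces, in every window of \<open>N\<^sub>u\<close> consecutive steps, some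
  regressor \<open>D\<^sub>j\<close> with \<open>\<parallel>D\<^sub>j (\<theta>\<^sup>* - \<theta>)\<parallel> \<ge> r = \<epsilon>\<surd>(\<beta>/N\<^sub>u)\<close>. Maximising the linear functional
  \<open>\<langle>D\<^sub>j (\<theta>\<^sup>* - \<theta>), \<cdot>\<rangle>\<close> over \<open>\<W>\<close> yields a boundary point \<open>w\<^sup>0\<close> such that every disturbance in
  the ball of radius \<open>r\<close> around \<open>w\<^sup>0\<close> falsifies \<open>\<theta>\<close> at step \<open>j + 1\<close>; by the tight bound
  assumption this happens with probability at least \<open>p\<^sub>w(r)\<close>. Choosing one such step in each
  of the \<open>\<lfloor>t/N\<^sub>u\<rfloor>\<close> complete windows, independence of the disturbances multiplies the
  survival probabilities.\<close>

lemma matrix_vector_mult_sum_left: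
  "(\<Sum>j\<in>S. A j) *v (x :: 'a :: comm_semiring_1 ^ 'n) = (\<Sum>j\<in>S. A j *v x)"
  by (induction S rule: infinite_finite_induct) (auto simp: matrix_vector_mult_add_rdistrib)

lemma inner_transpose_mult_self:
  fixes A :: "real^'p^'n"
  shows "x \<bullet> ((transpose A ** A) *v x) = (norm (A *v x))\<^sup>2"
proof -
  have "x \<bullet> ((transpose A ** A) *v x) = x \<bullet> ((A *v x) v* A)"
    by (simp add: matrix_vector_mul_assoc[symmetric] transpose_matrix_vector)
  also have "\<dots> = (A *v x) \<bullet> (A *v x)"
    by (subst inner_commute) (rule dot_lmul_matrix)
  finally show ?thesis
    by (simp add: power2_norm_eq_inner)
qed

lemma loewner_ge_gram_sum_imp:
  assumes "loewner_ge (\<Sum>j\<in>S. transpose (D j) ** D j) (\<beta> *\<^sub>R mat 1)"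
  shows "\<beta> * (norm (x :: real^'p))\<^sup>2 \<le> (\<Sum>j\<in>S. (norm (D j *v x))\<^sup>2)"
proof -
  have "x \<bullet> ((\<Sum>j\<in>S. transpose (D j) ** D j) *v x) = (\<Sum>j\<in>S. (norm (D j *v x))\<^sup>2)"
    by (simp only: matrix_vector_mult_sum_left inner_sum_right inner_transpose_mult_self)
  moreover have "x \<bullet> ((\<beta> *\<^sub>R mat 1) *v x) = \<beta> * (norm x)\<^sup>2"
    by (simp add: scaleR_matrix_vector_assoc[symmetric] power2_norm_eq_inner)
  moreover have "0 \<le> x \<bullet> ((\<Sum>j\<in>S. transpose (D j) ** D j) *v x - (\<beta> *\<^sub>R mat 1) *v x)"
    using assms unfolding loewner_ge_def by (metis matrix_vector_mult_diff_rdistrib)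
  ultimately show ?thesis
    by (simp add: inner_diff_right)
qed

lemma loewner_ge_gram_sum_obtains_large:
  assumes "loewner_ge (\<Sum>j\<in>S. transpose (D j) ** D j) (\<beta> *\<^sub>R mat 1)"
    and "finite S" "S \<noteq> {}" "\<beta> \<ge> 0"
  shows "\<exists>j\<in>S. sqrt (\<beta> / card S) * norm (x :: real^'p) \<le> norm (D j *v x)"
proof (rule ccontr)
  define c where "c = sqrt (\<beta> / card S) * norm x"
  assume "\<not> (\<exists>j\<in>S. c \<le> norm (D j *v x))"
  then have "(norm (D j *v x))\<^sup>2 < c\<^sup>2" if "j \<in> S" for j
    using that by (meson not_le norm_ge_zero power_strict_mono zero_less_numeral)
  then have "(\<Sum>j\<in>S. (norm (D j *v x))\<^sup>2) < (\<Sum>j\<in>S. c\<^sup>2)"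
    using assms(2,3) by (intro sum_strict_mono) auto
  also have "\<dots> = \<beta> * (norm x)\<^sup>2"
    using assms(2-4) by (simp add: c_def power_mult_distrib)
  finally show False
    using loewner_ge_gram_sum_imp[OF assms(1), of x] by simp
qed

lemma loewner_ge_window_obtains_large_regressors:
  fixes N :: nat
  assumes "\<And>t. loewner_ge (\<Sum>j\<in>{t..<t+N}. transpose (D j) ** D j) (\<beta> *\<^sub>R mat 1)"
    and "N > 0" "\<beta> \<ge> 0"
  obtains J :: "nat \<Rightarrow> nat" where "\<And>k. J k \<in> {k*N..<k*N+N}"
    and "\<And>k. sqrt (\<beta> / N) * norm (x :: real^'p) \<le> norm (D (J k) *v x)"
proof -
  have "\<exists>j\<in>{k*N..<k*N+N}. sqrt (\<beta> / card {k*N..<k*N+N}) * norm x \<le> norm (D j *v x)" for k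
    using assms(2,3) by (intro loewner_ge_gram_sum_obtains_large[OF assms(1)]) auto
  then have "\<exists>j. j \<in> {k*N..<k*N+N} \<and> sqrt (\<beta> / N) * norm x \<le> norm (D j *v x)" for k
    by force
  then show ?thesis
    using that by metis
qed

text \<open>The point of \<open>W\<close> maximising \<open>\<langle>v, \<cdot>\<rangle>\<close> lies on the frontier, and a translate by \<open>v\<close>
  of anything within distance \<open>\<parallel>v\<parallel>\<close> of it exceeds that maximum.\<close>
lemma compact_frontier_point_translate_avoids:
  fixes W :: "'a :: real_inner set"
  assumes "compact W" "W \<noteq> {}" "r \<le> norm v" "r > 0"
  shows "\<exists>w0\<in>frontier W. \<forall>u. norm (u - w0) < r \<longrightarrow> v + u \<notin> W"
proof -
  obtain w0 where w0: "w0 \<in> W" "\<And>y. y \<in> W \<Longrightarrow> v \<bullet> y \<le> v \<bullet> w0"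
  proof -
    have "continuous_on W (\<lambda>y. v \<bullet> y)"
      by (intro continuous_intros)
    then show ?thesis
      using continuous_attains_sup[OF assms(1,2)] that by blast
  qed
  have nv: "norm v > 0"
    using assms by linarith
  have "w0 \<notin> interior W"
  proof
    assume "w0 \<in> interior W"
    then obtain e where e: "e > 0" "ball w0 e \<subseteq> W"
      by (auto simp: mem_interior)
    define y where "y = w0 + (e / 2 / norm v) *\<^sub>R v"
    have "dist w0 y < e"
      using e nv by (simp add: y_def dist_norm)
    then have "v \<bullet> y \<le> v \<bullet> w0"
      using e w0(2) by auto
    moreover have "v \<bullet> y = v \<bullet> w0 + e / 2 * norm v"
      using nv by (simp add: y_def inner_add_right power2_norm_eq_inner[symmetric] power2_eq_square)
    moreover have "e / 2 * norm v > 0"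
      using e nv by simp
    ultimately show False
      by linarith
  qed
  then have "w0 \<in> frontier W"
    using w0(1) closure_subset by (auto simp: frontier_def)
  moreover have "v + u \<notin> W" if u: "norm (u - w0) < r" for u
  proof
    assume "v + u \<in> W"
    then have "v \<bullet> (v + u) \<le> v \<bullet> w0"
      by (rule w0(2))
    then have "v \<bullet> v \<le> - (v \<bullet> (u - w0))"
      by (simp add: inner_add_right inner_diff_right)
    also have "\<dots> \<le> norm v * norm (u - w0)"
      using norm_cauchy_schwarz[of "-v" "u - w0"] by simp
    also have "\<dots> < norm v * norm v"
      using u assms(3) nv by simp
    finally show False
      by (simp add: power2_norm_eq_inner[symmetric] power2_eq_square)
  qed
  ultimately show ?thesis
    by blast
qed

lemma window_choice_inj:
  fixes J :: "nat \<Rightarrow> nat"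
  assumes "\<And>k. J k \<in> {k*N..<k*N+N}"
  shows "inj J"
proof -
  have "J k div N = k" for k
    using assms[of k] by (intro div_nat_eqI) (auto simp: algebra_simps)
  then show ?thesis
    by (metis injI)
qed

lemma min_param_set_window_choice:
  fixes J :: "nat \<Rightarrow> nat"
  assumes "\<theta> \<in> min_param_set \<Theta>0 D \<theta>s W w t \<omega>"
    and "\<And>k. J k \<in> {k*N..<k*N+N}" "k < t div N"
  shows "D (J k) *v (\<theta>s - \<theta>) + w (J k) \<omega> \<in> W"
proof -
  have "J k < N * Suc k"
    using assms(2)[of k] by (simp add: algebra_simps)
  also have "\<dots> \<le> N * (t div N)"
    using assms(3) by (intro mult_le_mono2) simp
  also have "\<dots> \<le> t"
    by simp
  finally have "Suc (J k) \<in> {1..t}"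
    by simp
  then have "\<theta> \<in> unfalsified D \<theta>s W w (Suc (J k)) \<omega>"
    using assms(1) by (auto simp: min_param_set_def)
  then show ?thesis
    by (simp add: unfalsified_def)
qed

lemma closed_translate_vimage_borel:
  fixes W :: "'a :: real_normed_vector set"
  assumes "closed W"
  shows "{u. v + u \<in> W} \<in> sets borel"
proof -
  have "closed ((\<lambda>u. v + u) -` W)"
    using assms by (intro continuous_closed_vimage) (auto intro: continuous_intros)
  then show ?thesis
    by (simp add: vimage_def)
qed

lemma (in prob_space) prob_le_one_minus_disjoint:
  assumes "A \<in> events" "C \<in> events" "A \<inter> C = {}" "p \<le> prob C"
  shows "prob A \<le> 1 - p"
  using finite_measure_Union[OF assms(1-3)] prob_le_1[of "A \<union> C"] assms(4) by linarith

lemma (in prob_space) prob_translate_in_compact_le: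
  fixes X :: "'a \<Rightarrow> 'b :: euclidean_space"
  assumes "compact W" "W \<noteq> {}" "X \<in> borel_measurable M" "r > 0" "r \<le> norm v"
    and "\<And>w0. w0 \<in> frontier W \<Longrightarrow> p \<le> prob {\<omega> \<in> space M. norm (X \<omega> - w0) < r}"
  shows "prob (X -` {u. v + u \<in> W} \<inter> space M) \<le> 1 - p"
proof -
  obtain w0 where "w0 \<in> frontier W" and w0_avoids: "\<And>u. norm (u - w0) < r \<Longrightarrow> v + u \<notin> W"
    using compact_frontier_point_translate_avoids[OF assms(1,2,5,4)] by blast
  let ?C = "{\<omega> \<in> space M. norm (X \<omega> - w0) < r}"
  show ?thesis
  proof (rule prob_le_one_minus_disjoint)
    show "X -` {u. v + u \<in> W} \<inter> space M \<in> events"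
      using assms(1) by (intro measurable_sets[OF assms(3)] closed_translate_vimage_borel compact_imp_closed)
    show "?C \<in> events"
      using assms(3) by measurable
    show "(X -` {u. v + u \<in> W} \<inter> space M) \<inter> ?C = {}"
      using w0_avoids by auto
    show "p \<le> prob ?C"
      by (rule assms(6)[OF \<open>w0 \<in> frontier W\<close>])
  qed
qed

lemma (in prob_space) prob_indep_vars_all_le_power:
  assumes "indep_vars M' X I" "inj_on f K" "finite K" "f ` K \<subseteq> I"
    and "\<And>k. k \<in> K \<Longrightarrow> B k \<in> sets (M' (f k))"
    and "\<And>k. k \<in> K \<Longrightarrow> prob (X (f k) -` B k \<inter> space M) \<le> q"
  shows "prob {\<omega> \<in> space M. \<forall>k\<in>K. X (f k) \<omega> \<in> B k} \<le> q ^ card K"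
proof (cases "K = {}")
  case False
  define A where "A j = B (inv_into K f j)" for j
  have A_f: "A (f k) = B k" if "k \<in> K" for k
    using assms(2) that by (simp add: A_def)
  have "{\<omega> \<in> space M. \<forall>k\<in>K. X (f k) \<omega> \<in> B k} = (\<Inter>j\<in>f ` K. X j -` A j \<inter> space M)"
    using False by (auto simp: A_f)
  also have "prob \<dots> = (\<Prod>j\<in>f ` K. prob (X j -` A j \<inter> space M))"
    using False assms by (intro indep_varsD) (auto simp: A_f)
  also have "\<dots> = (\<Prod>k\<in>K. prob (X (f k) -` B k \<inter> space M))"
    using assms(2) by (simp add: prod.reindex A_f)
  also have "\<dots> \<le> (\<Prod>k\<in>K. q)"
    using assms(6) by (intro prod_mono) auto
  finally show ?thesis
    by simp
qed (simp add: prob_space)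

theorem theorem2:
  fixes M :: "'w measure"
    and \<theta>s :: "real^'p"
    and \<Theta>0 :: "(real^'p) set"
    and Pw :: "real^'n^'m" and pw :: "real^'m"
    and w :: "nat \<Rightarrow> 'w \<Rightarrow> real^'n"
    and D :: "nat \<Rightarrow> real^'p^'n"
    and p_w :: "real \<Rightarrow> real"
    and \<tau> \<beta> :: real and Nu :: nat
    and \<epsilon> :: real and \<theta> :: "real^'p" and t :: nat
  assumes M: "prob_space M"
    and Theta0: "polytope \<Theta>0" "\<theta>s \<in> \<Theta>0"
    and W_compact: "compact (hpoly Pw pw)"
    and pw_pos: "\<forall>i. pw $ i > 0"
    and w_rv: "\<And>t. w t \<in> borel_measurable M"
    and w_indep: "prob_space.indep_vars M (\<lambda>_. borel) w UNIV"
    and w_in_W: "\<And>t \<omega>. \<omega> \<in> space M \<Longrightarrow> w t \<omega> \<in> hpoly Pw pw"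
    and tight_range: "\<And>e. e > 0 \<Longrightarrow> 0 < p_w e \<and> p_w e \<le> 1"
    and tight: "\<And>w0 e t. w0 \<in> frontier (hpoly Pw pw) \<Longrightarrow> e > 0 \<Longrightarrow>
                  measure M {\<omega> \<in> space M. norm (w t \<omega> - w0) < e} \<ge> p_w e"
    and tau_pos: "\<tau> > 0" and beta_pos: "\<beta> > 0"
    and Nu_ge: "real Nu \<ge> real_of_int \<lceil>real CARD('p) / real CARD('n)\<rceil>"
    and PE_bound: "\<And>t. onorm (\<lambda>x. D t *v x) \<le> \<tau>"
    and PE_excite: "\<And>t. loewner_ge (\<Sum>j\<in>{t..<t+Nu}. transpose (D j) ** D j) (\<beta> *\<^sub>R mat 1)"
    and eps_pos: "\<epsilon> > 0"
    and theta_in: "\<theta> \<in> \<Theta>0"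
    and theta_far: "norm (\<theta> - \<theta>s) \<ge> \<epsilon>"
  shows "measure M {\<omega> \<in> space M. \<theta> \<in> min_param_set \<Theta>0 D \<theta>s (hpoly Pw pw) w t \<omega>}
           \<le> (1 - p_w (\<epsilon> * sqrt (\<beta> / real Nu))) ^ (t div Nu)"
proof -
  interpret prob_space M
    by (rule M)
  define W where "W = hpoly Pw pw"
  define r where "r = \<epsilon> * sqrt (\<beta> / real Nu)"
  define \<delta> where "\<delta> = \<theta>s - \<theta>"
  define B where "B k = {u. D k *v \<delta> + u \<in> W}" for k
  have "0 < real_of_int \<lceil>real CARD('p) / real CARD('n)\<rceil>"
    by simp
  then have Nu_pos: "Nu > 0"
    using Nu_ge by linarith
  have r_pos: "r > 0"
    using eps_pos beta_pos Nu_pos by (simp add: r_def)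
  have "r \<le> sqrt (\<beta> / Nu) * norm \<delta>"
    using mult_left_mono[OF theta_far, of "sqrt (\<beta> / Nu)"] beta_pos
    by (simp add: r_def \<delta>_def norm_minus_commute mult.commute)
  then obtain J where J_window: "\<And>k. J k \<in> {k*Nu..<k*Nu+Nu}"
    and J_large: "\<And>k. r \<le> norm (D (J k) *v \<delta>)"
    using loewner_ge_window_obtains_large_regressors[OF PE_excite Nu_pos, of \<delta>] beta_pos
    by (metis less_imp_le order.trans)
  have B_borel: "B k \<in> sets borel" for k
    using W_compact by (simp add: B_def W_def closed_translate_vimage_borel compact_imp_closed)
  have "0 \<in> W"
    using pw_pos by (simp add: W_def hpoly_def less_imp_le)
  then have B_le: "prob (w (J k) -` B (J k) \<inter> space M) \<le> 1 - p_w r" for k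
    unfolding B_def W_def
    by (intro prob_translate_in_compact_le[OF W_compact _ w_rv r_pos J_large tight[OF _ r_pos]])
      (auto simp: W_def)
  have "prob {\<omega> \<in> space M. \<theta> \<in> min_param_set \<Theta>0 D \<theta>s W w t \<omega>}
      \<le> prob {\<omega> \<in> space M. \<forall>k\<in>{..<t div Nu}. w (J k) \<omega> \<in> B (J k)}"
    using min_param_set_window_choice[OF _ J_window] measurable_sets[OF w_rv B_borel]
    by (intro finite_measure_mono sets.sets_Collect_finite_All)
      (auto simp: B_def \<delta>_def vimage_def Int_def conj_commute)
  also have "\<dots> \<le> (1 - p_w r) ^ card {..<t div Nu}"
    using window_choice_inj[OF J_window] B_borel B_le
    by (intro prob_indep_vars_all_le_power[OF w_indep]) (auto intro: inj_on_subset)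
  finally show ?thesis
    by (simp add: W_def r_def)
qed

end
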